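(* Let $\{x_n\}$ be a sequence in $\Delta([a,b])$ converging to $x^*$. Then there exist an increasing sequence $\{x'_n\}$ and a decreasing sequence $\{x''_n\}$ in $\Delta([a,b])$ such that $x'_n\le x_n\le x''_n$ for all $n$ and $\lim_n x'_n=x^*=\lim_n x''_n$.
   Context: $a<b$ reals; $\Delta([a,b])$ is the set of Borel probability measures on $[a,b]$ with the topology of weak convergence. The order $\le$ is first-order stochastic dominance: $q\le p$ iff $\int h\,dq\le\int h\,dp$ for every bounded continuous nondecreasing $h:[a,b]\to\mathbf{R}$; increasing/decreasing refer to this order. *)

theory Defs
  imports "HOL-Probability.Probability"
begin

definition Delta :: "real \<Rightarrow> real \<Rightarrow> real measure set" where
  "Delta a b = {M. prob_space M \<and> sets M = sets (restrict_space borel {a..b})}"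

definition weak_conv_on :: "real \<Rightarrow> real \<Rightarrow> (nat \<Rightarrow> real measure) \<Rightarrow> real measure \<Rightarrow> bool" where
  "weak_conv_on a b xs x \<longleftrightarrow>
     (\<forall>f :: real \<Rightarrow> real. continuous_on {a..b} f \<and> bounded (f ` {a..b}) \<longrightarrow>
        (\<lambda>n. \<integral>t. f t \<partial>(xs n)) \<longlonglongrightarrow> (\<integral>t. f t \<partial>x))"

definition fosd :: "real \<Rightarrow> real \<Rightarrow> real measure \<Rightarrow> real measure \<Rightarrow> bool" where
  "fosd a b q p \<longleftrightarrow>
     (\<forall>h :: real \<Rightarrow> real. continuous_on {a..b} h \<and> bounded (h ` {a..b}) \<and> mono_on {a..b} h \<longrightarrow>
        (\<integral>t. h t \<partial>q) \<le> (\<integral>t. h t \<partial>p))"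

end

theory Submission
  imports Defs
begin

text \<open>By Skorohod's representation theorem the measures \<open>x\<^sub>n\<close> and \<open>x\<^sup>*\<close> are the laws of
  \<open>[a,b]\<close>-valued random variables \<open>Z\<^sub>n\<close> converging pointwise to \<open>Y\<close> on one probability space.
  The tail infima \<open>inf\<^sub>k\<^sub>\<ge>\<^sub>n Z\<^sub>k\<close> increase, the tail suprema \<open>sup\<^sub>k\<^sub>\<ge>\<^sub>n Z\<^sub>k\<close> decrease, they
  sandwich \<open>Z\<^sub>n\<close> and both converge pointwise to \<open>Y\<close>. Pointwise order of random variables
  yields stochastic dominance of their laws, and pointwise convergence yields weak convergence
  by dominated convergence, so the laws of the tail infima and suprema are the required sequences.\<close>

text \<open>The law of \<open>Z\<close> is compared with \<open>M\<close> only on continuous test functions: this is all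
  that \<open>fosd\<close> and \<open>weak_conv_on\<close> observe.\<close>

definition represents :: "real \<Rightarrow> real \<Rightarrow> 'a measure \<Rightarrow> ('a \<Rightarrow> real) \<Rightarrow> real measure \<Rightarrow> bool" where
  "represents a b \<Omega> Z M \<longleftrightarrow>
     Z \<in> measurable \<Omega> (restrict_space borel {a..b}) \<and>
     (\<forall>f :: real \<Rightarrow> real. continuous_on {a..b} f \<longrightarrow> integral\<^sup>L M f = (\<integral>w. f (Z w) \<partial>\<Omega>))"

lemma space_Delta:
  assumes "M \<in> Delta a b"
  shows "space M = {a..b}"
proof -
  have "sets M = sets (restrict_space borel {a..b})"
    using assms by (simp add: Delta_def)
  then show ?thesis
    by (simp add: sets_eq_imp_space_eq space_restrict_space)
qed

lemma measurable_ident_Delta: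
  assumes "M \<in> Delta a b"
  shows "(\<lambda>t. t) \<in> borel_measurable M"
proof -
  have "sets M = sets (restrict_space borel {a..b})"
    using assms by (simp add: Delta_def)
  then have eq: "measurable M borel = measurable (restrict_space borel {a..b}) borel"
    by (rule measurable_cong_sets) simp
  have "(\<lambda>t :: real. t) \<in> measurable (restrict_space borel {a..b}) borel"
    by (rule measurable_restrict_space1) simp
  then show ?thesis
    unfolding eq .
qed

lemma real_distribution_distr_Delta:
  assumes "M \<in> Delta a b"
  shows "real_distribution (distr M borel (\<lambda>t. t))"
proof -
  have "prob_space M"
    using assms by (simp add: Delta_def)
  then show ?thesis
    unfolding real_distribution_def real_distribution_axioms_def
    using prob_space.prob_space_distr[OF \<open>prob_space M\<close> measurable_ident_Delta[OF assms]] by simp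
qed

lemma distr_in_Delta:
  assumes "prob_space \<Omega>" "Z \<in> measurable \<Omega> (restrict_space borel {a..b})"
  shows "distr \<Omega> (restrict_space borel {a..b}) Z \<in> Delta a b"
  using prob_space.prob_space_distr[OF assms] by (simp add: Delta_def)

lemma represents_distr:
  assumes "Z \<in> measurable \<Omega> (restrict_space borel {a..b})"
  shows "represents a b \<Omega> Z (distr \<Omega> (restrict_space borel {a..b}) Z)"
  unfolding represents_def
  using assms by (auto intro: integral_distr borel_measurable_continuous_on_restrict)

lemma integrable_continuous_on_comp:
  fixes a b :: real and f :: "real \<Rightarrow> real"
  assumes "finite_measure \<Omega>" "Z \<in> measurable \<Omega> (restrict_space borel {a..b})"
    and "continuous_on {a..b} f"
  shows "integrable \<Omega> (\<lambda>w. f (Z w))"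
proof -
  obtain B where B: "\<And>t. t \<in> {a..b} \<Longrightarrow> norm (f t) \<le> B"
    using continuous_on_compact_bound[OF compact_Icc[of a b] assms(3)] by blast
  have "AE w in \<Omega>. norm (f (Z w)) \<le> B"
    using assms(2) by (intro AE_I2 B) (auto simp: measurable_restrict_space2_iff)
  moreover have "(\<lambda>w. f (Z w)) \<in> borel_measurable \<Omega>"
    using assms(2) borel_measurable_continuous_on_restrict[OF assms(3)] by (rule measurable_compose)
  ultimately show ?thesis
    by (rule finite_measure.integrable_const_bound[OF assms(1)])
qed

lemma fosd_if_represents_le:
  assumes "prob_space \<Omega>" "represents a b \<Omega> V p" "represents a b \<Omega> W q"
    and "\<And>w. w \<in> space \<Omega> \<Longrightarrow> V w \<le> W w"
  shows "fosd a b p q"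
  unfolding fosd_def
proof (intro allI impI)
  fix h :: "real \<Rightarrow> real"
  assume "continuous_on {a..b} h \<and> bounded (h ` {a..b}) \<and> mono_on {a..b} h"
  then have h: "continuous_on {a..b} h" "mono_on {a..b} h" by auto
  have V: "V \<in> measurable \<Omega> (restrict_space borel {a..b})"
    and W: "W \<in> measurable \<Omega> (restrict_space borel {a..b})"
    using assms(2,3) by (auto simp: represents_def)
  have "(\<integral>w. h (V w) \<partial>\<Omega>) \<le> (\<integral>w. h (W w) \<partial>\<Omega>)"
  proof (rule integral_mono)
    show "integrable \<Omega> (\<lambda>w. h (V w))" "integrable \<Omega> (\<lambda>w. h (W w))"
      using prob_space.finite_measure[OF assms(1)] V W h(1)
      by (auto intro: integrable_continuous_on_comp)
    show "h (V w) \<le> h (W w)" if "w \<in> space \<Omega>" for w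
      using V W that assms(4)[OF that]
      by (intro mono_onD[OF h(2)]) (auto simp: measurable_restrict_space2_iff)
  qed
  then show "integral\<^sup>L p h \<le> integral\<^sup>L q h"
    using assms(2,3) h(1) by (simp add: represents_def)
qed

lemma weak_conv_on_if_represents_tendsto:
  assumes "prob_space \<Omega>" "\<And>n. represents a b \<Omega> (Z n) (M n)" "represents a b \<Omega> Y N"
    and "\<And>w. w \<in> space \<Omega> \<Longrightarrow> (\<lambda>n. Z n w) \<longlonglongrightarrow> Y w"
  shows "weak_conv_on a b M N"
  unfolding weak_conv_on_def
proof (intro allI impI)
  fix f :: "real \<Rightarrow> real"
  assume "continuous_on {a..b} f \<and> bounded (f ` {a..b})"
  then have f: "continuous_on {a..b} f" by simp
  obtain B where B: "\<And>t. t \<in> {a..b} \<Longrightarrow> norm (f t) \<le> B"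
    using continuous_on_compact_bound[OF compact_Icc[of a b] f] by blast
  have Z: "Z n \<in> measurable \<Omega> (restrict_space borel {a..b})" for n
    using assms(2) by (simp add: represents_def)
  have Y: "Y \<in> measurable \<Omega> (restrict_space borel {a..b})"
    using assms(3) by (simp add: represents_def)
  have Z_in: "Z n w \<in> {a..b}" and Y_in: "Y w \<in> {a..b}" if "w \<in> space \<Omega>" for n w
    using Z[of n] Y that by (auto simp: measurable_restrict_space2_iff)
  have "(\<lambda>n. \<integral>w. f (Z n w) \<partial>\<Omega>) \<longlonglongrightarrow> (\<integral>w. f (Y w) \<partial>\<Omega>)"
  proof (rule integral_dominated_convergence[where w="\<lambda>_. B"])
    show "(\<lambda>w. f (Y w)) \<in> borel_measurable \<Omega>" "(\<lambda>w. f (Z n w)) \<in> borel_measurable \<Omega>" for n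
      using Y Z borel_measurable_continuous_on_restrict[OF f] by (auto intro: measurable_compose)
    show "integrable \<Omega> (\<lambda>_. B)"
      using assms(1) by (simp add: prob_space.finite_measure finite_measure.integrable_const)
    show "AE w in \<Omega>. norm (f (Z n w)) \<le> B" for n
      by (intro AE_I2 B Z_in)
    show "AE w in \<Omega>. (\<lambda>n. f (Z n w)) \<longlonglongrightarrow> f (Y w)"
      by (intro AE_I2 continuous_on_tendsto_compose[OF f assms(4)] Y_in always_eventually allI Z_in)
  qed
  then show "(\<lambda>n. integral\<^sup>L (M n) f) \<longlonglongrightarrow> integral\<^sup>L N f"
    using assms(2,3) f by (simp add: represents_def)
qed

lemma Inf_tail_bounds:
  fixes z :: "nat \<Rightarrow> real"
  assumes "\<And>k. z k \<in> {a..b}"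
  shows "(INF k\<in>{n..}. z k) \<in> {a..b}" and "(INF k\<in>{n..}. z k) \<le> z n"
    and "m \<le> n \<Longrightarrow> (INF k\<in>{m..}. z k) \<le> (INF k\<in>{n..}. z k)"
proof -
  have bdd: "bdd_below (z ` A)" for A
    using assms by (auto intro: bdd_belowI[where m=a])
  show le: "(INF k\<in>{n..}. z k) \<le> z n"
    by (rule cINF_lower[OF bdd]) simp
  have "a \<le> (INF k\<in>{n..}. z k)"
    using assms by (intro cINF_greatest) auto
  with le assms[of n] show "(INF k\<in>{n..}. z k) \<in> {a..b}"
    by auto
  show "m \<le> n \<Longrightarrow> (INF k\<in>{m..}. z k) \<le> (INF k\<in>{n..}. z k)"
    by (rule cINF_superset_mono[OF _ bdd]) auto
qed

lemma Sup_tail_bounds: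
  fixes z :: "nat \<Rightarrow> real"
  assumes "\<And>k. z k \<in> {a..b}"
  shows "(SUP k\<in>{n..}. z k) \<in> {a..b}" and "z n \<le> (SUP k\<in>{n..}. z k)"
    and "m \<le> n \<Longrightarrow> (SUP k\<in>{n..}. z k) \<le> (SUP k\<in>{m..}. z k)"
proof -
  have bdd: "bdd_above (z ` A)" for A
    using assms by (auto intro: bdd_aboveI[where M=b])
  show le: "z n \<le> (SUP k\<in>{n..}. z k)"
    by (rule cSUP_upper[OF _ bdd]) simp
  have "(SUP k\<in>{n..}. z k) \<le> b"
    using assms by (intro cSUP_least) auto
  with le assms[of n] show "(SUP k\<in>{n..}. z k) \<in> {a..b}"
    by auto
  show "m \<le> n \<Longrightarrow> (SUP k\<in>{n..}. z k) \<le> (SUP k\<in>{m..}. z k)"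
    by (rule cSUP_subset_mono[OF _ bdd]) auto
qed

lemma measurable_Inf_tail:
  fixes Z :: "nat \<Rightarrow> 'a \<Rightarrow> real"
  assumes "\<And>k. Z k \<in> measurable \<Omega> (restrict_space borel {a..b})"
  shows "(\<lambda>w. INF k\<in>{n..}. Z k w) \<in> measurable \<Omega> (restrict_space borel {a..b})"
proof -
  have "Z k w \<in> {a..b}" if "w \<in> space \<Omega>" for k w
    using measurable_space[OF assms that] by simp
  then have "(INF k\<in>{n..}. Z k w) \<in> {a..b}" if "w \<in> space \<Omega>" for w
    using that by (intro Inf_tail_bounds(1))
  then show ?thesis
    using assms by (auto simp: measurable_restrict_space2_iff intro!: borel_measurable_cINF_real)
qed

lemma measurable_Sup_tail:
  fixes Z :: "nat \<Rightarrow> 'a \<Rightarrow> real"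
  assumes "\<And>k. Z k \<in> measurable \<Omega> (restrict_space borel {a..b})"
  shows "(\<lambda>w. SUP k\<in>{n..}. Z k w) \<in> measurable \<Omega> (restrict_space borel {a..b})"
proof -
  have Z_in: "Z k w \<in> {a..b}" if "w \<in> space \<Omega>" for k w
    using measurable_space[OF assms that] by simp
  then have "(SUP k\<in>{n..}. Z k w) \<in> {a..b}" if "w \<in> space \<Omega>" for w
    using that by (intro Sup_tail_bounds(1))
  then show ?thesis
    using assms Z_in by (auto simp: measurable_restrict_space2_iff
        intro!: borel_measurable_cSUP bdd_aboveI2[where M=b])
qed

lemma tendsto_Inf_tail:
  fixes z :: "nat \<Rightarrow> real"
  assumes "z \<longlonglongrightarrow> l"
  shows "(\<lambda>n. INF k\<in>{n..}. z k) \<longlonglongrightarrow> l"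
proof (rule LIMSEQ_I)
  fix e :: real assume "0 < e"
  then obtain N where N: "\<And>k. N \<le> k \<Longrightarrow> \<bar>z k - l\<bar> < e / 2"
    using LIMSEQ_D[OF assms, of "e / 2"] by auto
  have bdd: "bdd_below (z ` A)" for A
    using bounded_imp_bdd_below[OF convergent_imp_bounded[OF assms]] by (rule bdd_below_mono) auto
  have "\<bar>(INF k\<in>{n..}. z k) - l\<bar> < e" if "N \<le> n" for n
  proof -
    have "l - e / 2 \<le> z k" if "k \<in> {n..}" for k
    proof -
      have "\<bar>z k - l\<bar> < e / 2"
        using N \<open>N \<le> n\<close> that by simp
      then show ?thesis by linarith
    qed
    then have "l - e / 2 \<le> (INF k\<in>{n..}. z k)"
      by (intro cINF_greatest) auto
    moreover have "(INF k\<in>{n..}. z k) \<le> z n"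
      by (rule cINF_lower[OF bdd]) simp
    ultimately show ?thesis
      using N[OF that] \<open>0 < e\<close> by linarith
  qed
  then show "\<exists>N. \<forall>n\<ge>N. norm ((INF k\<in>{n..}. z k) - l) < e"
    by auto
qed

lemma tendsto_Sup_tail:
  fixes z :: "nat \<Rightarrow> real"
  assumes "z \<longlonglongrightarrow> l"
  shows "(\<lambda>n. SUP k\<in>{n..}. z k) \<longlonglongrightarrow> l"
proof -
  have "(\<lambda>n. - (INF k\<in>{n..}. - z k)) \<longlonglongrightarrow> - (- l)"
    by (intro tendsto_minus tendsto_Inf_tail assms)
  then show ?thesis
    by (simp add: Inf_real_def image_image)
qed

lemma clamp_real_in_interval: "a \<le> b \<Longrightarrow> clamp a b t \<in> {a..b :: real}"
  using clamp_in_interval[of a b t] by (simp add: cbox_interval)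

lemma clamp_real_cancel: "t \<in> {a..b :: real} \<Longrightarrow> clamp a b t = t"
  using clamp_cancel_cbox[of t a b] by (simp add: cbox_interval)

lemma continuous_on_clamp_real_comp:
  fixes f :: "real \<Rightarrow> 'a::metric_space"
  shows "continuous_on {a..b :: real} f \<Longrightarrow> continuous_on S (\<lambda>t. f (clamp a b t))"
  using clamp_continuous_on[of a b f S] by (simp add: cbox_interval)

text \<open>Skorohod's variables take values in \<open>[a,b]\<close> only almost surely; clamping them into
  \<open>[a,b]\<close> fixes this without changing their laws or their pointwise limits.\<close>

lemma represents_clamp:
  fixes a b :: real
  assumes "a \<le> b" "M \<in> Delta a b" "Y \<in> borel_measurable \<Omega>"
    and "distr \<Omega> borel Y = distr M borel (\<lambda>t. t)"
  shows "represents a b \<Omega> (\<lambda>w. clamp a b (Y w)) M"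
  unfolding represents_def
proof (intro conjI allI impI)
  show "(\<lambda>w. clamp a b (Y w)) \<in> measurable \<Omega> (restrict_space borel {a..b})"
    using assms(3) continuous_on_clamp_real_comp[of a b "\<lambda>t. t" UNIV]
      clamp_real_in_interval[OF assms(1)]
    by (auto simp: measurable_restrict_space2_iff
        intro: measurable_compose borel_measurable_continuous_onI)
  fix f :: "real \<Rightarrow> real"
  assume "continuous_on {a..b} f"
  then have f_clamp: "(\<lambda>t. f (clamp a b t)) \<in> borel_measurable borel"
    by (intro borel_measurable_continuous_onI continuous_on_clamp_real_comp)
  have "integral\<^sup>L M f = (\<integral>t. f (clamp a b t) \<partial>M)"
    by (rule Bochner_Integration.integral_cong) (simp_all add: space_Delta[OF assms(2)] clamp_real_cancel)
  also have "\<dots> = (\<integral>t. f (clamp a b t) \<partial>distr M borel (\<lambda>t. t))"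
    using integral_distr[OF measurable_ident_Delta[OF assms(2)] f_clamp] by simp
  also have "\<dots> = (\<integral>w. f (clamp a b (Y w)) \<partial>\<Omega>)"
    using integral_distr[OF assms(3) f_clamp] by (simp add: assms(4))
  finally show "integral\<^sup>L M f = (\<integral>w. f (clamp a b (Y w)) \<partial>\<Omega>)" .
qed

lemma weak_conv_m_distr_if_weak_conv_on:
  assumes "\<And>n. xs n \<in> Delta a b" "x \<in> Delta a b" "weak_conv_on a b xs x"
  shows "weak_conv_m (\<lambda>n. distr (xs n) borel (\<lambda>t. t)) (distr x borel (\<lambda>t. t))"
proof (rule integral_bdd_continuous_conv_imp_weak_conv[OF
      real_distribution_distr_Delta[OF assms(1)] real_distribution_distr_Delta[OF assms(2)]])
  fix f :: "real \<Rightarrow> real"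
  assume cont: "\<And>t. isCont f t" and bound: "\<And>t. \<bar>f t\<bar> \<le> 1"
  have f: "f \<in> borel_measurable borel"
    using cont by (intro borel_measurable_continuous_onI continuous_at_imp_continuous_on) auto
  have "continuous_on {a..b} f"
    using cont by (intro continuous_at_imp_continuous_on) auto
  moreover have "bounded (f ` {a..b})"
    unfolding bounded_iff using bound by auto
  ultimately have "(\<lambda>n. \<integral>t. f t \<partial>xs n) \<longlonglongrightarrow> (\<integral>t. f t \<partial>x)"
    using assms(3) unfolding weak_conv_on_def by blast
  moreover have "(\<integral>t. f t \<partial>distr M borel (\<lambda>t. t)) = (\<integral>t. f t \<partial>M)" if "M \<in> Delta a b" for M
    using integral_distr[OF measurable_ident_Delta[OF that] f] by simp
  ultimately show "(\<lambda>n. \<integral>t. f t \<partial>distr (xs n) borel (\<lambda>t. t))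
      \<longlonglongrightarrow> (\<integral>t. f t \<partial>distr x borel (\<lambda>t. t))"
    using assms(1,2) by simp
qed

lemma Skorohod_Delta:
  fixes a b :: real
  assumes "a \<le> b" "\<And>n. xs n \<in> Delta a b" "x \<in> Delta a b" "weak_conv_on a b xs x"
  obtains \<Omega> :: "real measure" and Z :: "nat \<Rightarrow> real \<Rightarrow> real" and Y :: "real \<Rightarrow> real"
  where "prob_space \<Omega>" "\<And>n. represents a b \<Omega> (Z n) (xs n)" "represents a b \<Omega> Y x"
    and "\<And>w. w \<in> space \<Omega> \<Longrightarrow> (\<lambda>n. Z n w) \<longlonglongrightarrow> Y w"
proof -
  from Skorohod[OF real_distribution_distr_Delta[OF assms(2)] real_distribution_distr_Delta[OF assms(3)]
      weak_conv_m_distr_if_weak_conv_on[OF assms(2-4)]]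
  obtain \<Omega> :: "real measure" and Zs Ys where \<Omega>: "prob_space \<Omega>"
    and Zs: "\<forall>n. Zs n \<in> borel_measurable \<Omega>"
      "\<forall>n. distr \<Omega> borel (Zs n) = distr (xs n) borel (\<lambda>t. t)"
    and Ys: "Ys \<in> measurable \<Omega> lborel" "distr \<Omega> borel Ys = distr x borel (\<lambda>t. t)"
    and conv: "\<forall>w \<in> space \<Omega>. (\<lambda>n. Zs n w) \<longlonglongrightarrow> Ys w"
    by (elim exE conjE) (rule that)
  have Ys_borel: "Ys \<in> borel_measurable \<Omega>"
    using Ys(1) by (simp add: measurable_cong_sets[OF refl sets_lborel])
  show thesis
  proof (rule that[OF \<Omega>])
    show "represents a b \<Omega> (\<lambda>w. clamp a b (Zs n w)) (xs n)" for n
      using Zs by (intro represents_clamp[OF assms(1,2)]) auto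
    show "represents a b \<Omega> (\<lambda>w. clamp a b (Ys w)) x"
      by (rule represents_clamp[OF assms(1,3) Ys_borel Ys(2)])
    have clamp: "continuous_on UNIV (clamp a b :: real \<Rightarrow> real)"
      using continuous_on_clamp_real_comp[of a b "\<lambda>t. t" UNIV] by simp
    show "(\<lambda>n. clamp a b (Zs n w)) \<longlonglongrightarrow> clamp a b (Ys w)" if "w \<in> space \<Omega>" for w
      using continuous_on_tendsto_compose[OF clamp bspec[OF conv that]] by simp
  qed
qed

lemma increasing_envelope:
  assumes "prob_space \<Omega>" "\<And>n. represents a b \<Omega> (Z n) (xs n)" "represents a b \<Omega> Y x"
    and "\<And>w. w \<in> space \<Omega> \<Longrightarrow> (\<lambda>n. Z n w) \<longlonglongrightarrow> Y w"
  obtains xl where "\<And>n. xl n \<in> Delta a b" "\<And>m n. m \<le> n \<Longrightarrow> fosd a b (xl m) (xl n)"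
    and "\<And>n. fosd a b (xl n) (xs n)" "weak_conv_on a b xl x"
proof -
  define L where "L n w = (INF k\<in>{n..}. Z k w)" for n w
  have Z_meas: "Z k \<in> measurable \<Omega> (restrict_space borel {a..b})" for k
    using assms(2) by (simp add: represents_def)
  have Z_in: "Z k w \<in> {a..b}" if "w \<in> space \<Omega>" for k w
    using measurable_space[OF Z_meas that] by simp
  have L_meas: "L n \<in> measurable \<Omega> (restrict_space borel {a..b})" for n
    unfolding L_def[abs_def] by (rule measurable_Inf_tail[OF Z_meas])
  have L_le: "L n w \<le> Z n w" and L_mono: "m \<le> n \<Longrightarrow> L m w \<le> L n w"
    if "w \<in> space \<Omega>" for m n w
    using Inf_tail_bounds(2,3)[of "\<lambda>k. Z k w", OF Z_in[OF that]] by (auto simp: L_def)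
  define xl where "xl n = distr \<Omega> (restrict_space borel {a..b}) (L n)" for n
  have L: "represents a b \<Omega> (L n) (xl n)" for n
    unfolding xl_def using L_meas by (rule represents_distr)
  show thesis
  proof (rule that)
    show "xl n \<in> Delta a b" for n
      unfolding xl_def using assms(1) L_meas by (rule distr_in_Delta)
    show "fosd a b (xl m) (xl n)" if "m \<le> n" for m n
      using L_mono[OF _ that] by (rule fosd_if_represents_le[OF assms(1) L L])
    show "fosd a b (xl n) (xs n)" for n
      using L_le by (rule fosd_if_represents_le[OF assms(1) L assms(2)])
    show "weak_conv_on a b xl x"
      using assms(4) by (intro weak_conv_on_if_represents_tendsto[OF assms(1) L assms(3)])
        (simp add: L_def tendsto_Inf_tail)
  qed
qed

lemma decreasing_envelope:
  assumes "prob_space \<Omega>" "\<And>n. represents a b \<Omega> (Z n) (xs n)" "represents a b \<Omega> Y x"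
    and "\<And>w. w \<in> space \<Omega> \<Longrightarrow> (\<lambda>n. Z n w) \<longlonglongrightarrow> Y w"
  obtains xu where "\<And>n. xu n \<in> Delta a b" "\<And>m n. m \<le> n \<Longrightarrow> fosd a b (xu n) (xu m)"
    and "\<And>n. fosd a b (xs n) (xu n)" "weak_conv_on a b xu x"
proof -
  define U where "U n w = (SUP k\<in>{n..}. Z k w)" for n w
  have Z_meas: "Z k \<in> measurable \<Omega> (restrict_space borel {a..b})" for k
    using assms(2) by (simp add: represents_def)
  have Z_in: "Z k w \<in> {a..b}" if "w \<in> space \<Omega>" for k w
    using measurable_space[OF Z_meas that] by simp
  have U_meas: "U n \<in> measurable \<Omega> (restrict_space borel {a..b})" for n
    unfolding U_def[abs_def] by (rule measurable_Sup_tail[OF Z_meas])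
  have U_ge: "Z n w \<le> U n w" and U_mono: "m \<le> n \<Longrightarrow> U n w \<le> U m w"
    if "w \<in> space \<Omega>" for m n w
    using Sup_tail_bounds(2,3)[of "\<lambda>k. Z k w", OF Z_in[OF that]] by (auto simp: U_def)
  define xu where "xu n = distr \<Omega> (restrict_space borel {a..b}) (U n)" for n
  have U: "represents a b \<Omega> (U n) (xu n)" for n
    unfolding xu_def using U_meas by (rule represents_distr)
  show thesis
  proof (rule that)
    show "xu n \<in> Delta a b" for n
      unfolding xu_def using assms(1) U_meas by (rule distr_in_Delta)
    show "fosd a b (xu n) (xu m)" if "m \<le> n" for m n
      using U_mono[OF _ that] by (rule fosd_if_represents_le[OF assms(1) U U])
    show "fosd a b (xs n) (xu n)" for n
      using U_ge by (rule fosd_if_represents_le[OF assms(1) assms(2) U])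
    show "weak_conv_on a b xu x"
      using assms(4) by (intro weak_conv_on_if_represents_tendsto[OF assms(1) U assms(3)])
        (simp add: U_def tendsto_Sup_tail)
  qed
qed

theorem mainTheorem10:
  fixes a b :: real and xs :: "nat \<Rightarrow> real measure" and x :: "real measure"
  assumes "a < b"
    and "\<And>n. xs n \<in> Delta a b"
    and "x \<in> Delta a b"
    and "weak_conv_on a b xs x"
  shows "\<exists>xl xu :: nat \<Rightarrow> real measure.
           (\<forall>n. xl n \<in> Delta a b \<and> xu n \<in> Delta a b) \<and>
           (\<forall>m n. m \<le> n \<longrightarrow> fosd a b (xl m) (xl n)) \<and>
           (\<forall>m n. m \<le> n \<longrightarrow> fosd a b (xu n) (xu m)) \<and>
           (\<forall>n. fosd a b (xl n) (xs n) \<and> fosd a b (xs n) (xu n)) \<and>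
           weak_conv_on a b xl x \<and> weak_conv_on a b xu x"
proof -
  obtain \<Omega> :: "real measure" and Z Y where \<Omega>: "prob_space \<Omega>"
    and Z: "\<And>n. represents a b \<Omega> (Z n) (xs n)" and Y: "represents a b \<Omega> Y x"
    and conv: "\<And>w. w \<in> space \<Omega> \<Longrightarrow> (\<lambda>n. Z n w) \<longlonglongrightarrow> Y w"
    using Skorohod_Delta[OF less_imp_le[OF assms(1)] assms(2-4)] by metis
  obtain xl where "\<And>n. xl n \<in> Delta a b" "\<And>m n. m \<le> n \<Longrightarrow> fosd a b (xl m) (xl n)"
    and "\<And>n. fosd a b (xl n) (xs n)" "weak_conv_on a b xl x"
    using increasing_envelope[OF \<Omega> Z Y conv] by metis
  moreover obtain xu where "\<And>n. xu n \<in> Delta a b" "\<And>m n. m \<le> n \<Longrightarrow> fosd a b (xu n) (xu m)"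
    and "\<And>n. fosd a b (xs n) (xu n)" "weak_conv_on a b xu x"
    using decreasing_envelope[OF \<Omega> Z Y conv] by metis
  ultimately show ?thesis
    by (intro exI[of _ xl] exI[of _ xu]) simp
qed

end
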